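(* Let $G$ be a grid-labelled graph of type $(3,3)$ all of whose edges are diagonal. Then $G$ satisfies the degree criterion if and only if $E(G)$ can be partitioned into edge sets of subgraphs $X_1,\dots,X_n$ each of which is locally isomorphic to a rotation of one of the building blocks $B_2,B_3,B_4,B_5$.
   Context: A grid-labelled graph of type $(a,b)$ is a simple graph whose vertex set is the grid $[a]\times[b]$. An edge $\{(i,j),(k,l)\}$ is diagonal if $i\neq k$ and $j\neq l$. The partial transpose $\Gamma(G)$ is the grid-labelled graph with edge set $\{\{(k,j),(i,l)\}:\{(i,j),(k,l)\}\in E(G)\}$; $G$ satisfies the degree criterion if every vertex has the same degree in $G$ and in $\Gamma(G)$. Two grid-labelled graphs $G,H$ of type $(a,b)$ are locally isomorphic if there are permutations $\pi$ of $[a]$ and $\sigma$ of $[b]$ with $\{(i,j),(k,l)\}\in E(G)\iff\{(\pi(i),\sigma(j)),(\pi(k),\sigma(l))\}\in E(H)$. A rotation of a type $(3,3)$ graph is its image under a power (including the identity) of the map $(i,j)\mapsto(j,4-i)$ on vertices. Building blocks (type $(3,3)$): $B_2$ with edges $\{(1,1),(2,2)\},\{(1,2),(2,1)\}$; $B_3$ with edges $\{(1,1),(2,2)\},\{(1,2),(2,3)\},\{(2,1),(1,3)\}$; $B_4$ with edges $\{(1,1),(2,3)\},\{(2,1),(3,3)\},\{(1,2),(3,1)\},\{(1,3),(3,2)\}$; $B_5$ with edges $\{(1,1),(3,3)\},\{(1,2),(2,1)\},\{(1,3),(2,2)\},\{(2,2),(3,1)\},\{(2,3),(3,2)\}$.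 *)

theory Defs
  imports Main "HOL-Combinatorics.Permutations"
begin

type_synonym vtx = "nat \<times> nat"

definition grid :: "nat \<Rightarrow> nat \<Rightarrow> vtx set" where
  "grid a b = {1..a} \<times> {1..b}"

definition grid_graph :: "nat \<Rightarrow> nat \<Rightarrow> vtx set set \<Rightarrow> bool" where
  "grid_graph a b E \<longleftrightarrow>
     (\<forall>e\<in>E. \<exists>u v. u \<in> grid a b \<and> v \<in> grid a b \<and> u \<noteq> v \<and> e = {u, v})"

definition diagonal_edge :: "vtx set \<Rightarrow> bool" where
  "diagonal_edge e \<longleftrightarrow> (\<exists>i j k l. e = {(i,j),(k,l)} \<and> i \<noteq> k \<and> j \<noteq> l)"

definition partial_transpose :: "vtx set set \<Rightarrow> vtx set set" where
  "partial_transpose E = {{(k,j),(i,l)} | i j k l. {(i,j),(k,l)} \<in> E}"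

definition deg :: "vtx set set \<Rightarrow> vtx \<Rightarrow> nat" where
  "deg E v = card {e \<in> E. v \<in> e}"

definition degree_criterion :: "nat \<Rightarrow> nat \<Rightarrow> vtx set set \<Rightarrow> bool" where
  "degree_criterion a b E \<longleftrightarrow> (\<forall>v\<in>grid a b. deg E v = deg (partial_transpose E) v)"

definition locally_isomorphic :: "nat \<Rightarrow> nat \<Rightarrow> vtx set set \<Rightarrow> vtx set set \<Rightarrow> bool" where
  "locally_isomorphic a b G H \<longleftrightarrow>
     (\<exists>\<pi> \<sigma>. \<pi> permutes {1..a} \<and> \<sigma> permutes {1..b} \<and>
        (\<forall>i\<in>{1..a}. \<forall>j\<in>{1..b}. \<forall>k\<in>{1..a}. \<forall>l\<in>{1..b}.
           {(i,j),(k,l)} \<in> G \<longleftrightarrow> {(\<pi> i, \<sigma> j),(\<pi> k, \<sigma> l)} \<in> H))"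

definition rot :: "vtx \<Rightarrow> vtx" where
  "rot p = (snd p, 4 - fst p)"

definition rotate_graph :: "nat \<Rightarrow> vtx set set \<Rightarrow> vtx set set" where
  "rotate_graph r E = (\<lambda>e. (rot ^^ r) ` e) ` E"

definition is_rotation :: "vtx set set \<Rightarrow> vtx set set \<Rightarrow> bool" where
  "is_rotation H B \<longleftrightarrow> (\<exists>r::nat. H = rotate_graph r B)"

definition B2 :: "vtx set set" where
  "B2 = {{(1,1),(2,2)}, {(1,2),(2,1)}}"
definition B3 :: "vtx set set" where
  "B3 = {{(1,1),(2,2)}, {(1,2),(2,3)}, {(2,1),(1,3)}}"
definition B4 :: "vtx set set" where
  "B4 = {{(1,1),(2,3)}, {(2,1),(3,3)}, {(1,2),(3,1)}, {(1,3),(3,2)}}"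
definition B5 :: "vtx set set" where
  "B5 = {{(1,1),(3,3)}, {(1,2),(2,1)}, {(1,3),(2,2)}, {(2,2),(3,1)}, {(2,3),(3,2)}}"

end

theory Submission
  imports Defs
begin

text \<open>
  On the 3x3 grid every diagonal edge is one of the two diagonals of a 2x2 sub-square (rows
  \<open>i < k\<close>, columns \<open>j < l\<close>), and the partial transpose swaps the two diagonals of each square.
  Hence the degree criterion only sees, for each of the nine squares, the difference
  \<open>z \<in> {-1, 0, 1}\<close> between the presence of its two diagonals, and it says exactly that \<open>z\<close>
  solves a homogeneous 9x9 linear system. A square with both diagonals present is a copy of
  \<open>B\<^sub>2\<close>; otherwise a finite check shows that every nonzero solution \<open>z\<close> dominates the sign
  pattern of a copy of \<open>B\<^sub>3\<close>, \<open>B\<^sub>4\<close> or \<open>B\<^sub>5\<close>. These copies satisfy the criterion, because it is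
  invariant under rotations and under row and column permutations, so they can be peeled off
  one at a time; conversely a disjoint union of graphs satisfying the criterion satisfies it.
\<close>

definition edge_transpose :: "vtx set \<Rightarrow> vtx set" where
  "edge_transpose e = {(fst u, snd w) | u w. u \<in> e \<and> w \<in> e \<and> u \<noteq> w}"

lemma edge_transpose_doubleton:
  "p \<noteq> q \<Longrightarrow> edge_transpose {p, q} = {(fst p, snd q), (fst q, snd p)}"
  unfolding edge_transpose_def by blast

lemma edge_transpose_involution:
  assumes "p \<noteq> q"
  shows "edge_transpose (edge_transpose {p, q}) = {p, q}"
proof -
  have "(fst p, snd q) \<noteq> (fst q, snd p)" using assms by (auto simp: prod_eq_iff)
  then show ?thesis using assms by (auto simp: edge_transpose_doubleton)
qed

lemma grid_graph_edgeE:
  assumes "grid_graph a b E" "e \<in> E"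
  obtains p q where "p \<in> grid a b" "q \<in> grid a b" "p \<noteq> q" "e = {p, q}"
  using assms unfolding grid_graph_def by blast

lemma grid_graph_empty: "grid_graph a b {}"
  unfolding grid_graph_def by simp

lemma grid_graph_insert:
  "p \<in> grid a b \<Longrightarrow> q \<in> grid a b \<Longrightarrow> p \<noteq> q \<Longrightarrow> grid_graph a b E \<Longrightarrow>
    grid_graph a b (insert {p, q} E)"
  unfolding grid_graph_def by blast

lemma grid_graph_mono: "grid_graph a b E \<Longrightarrow> F \<subseteq> E \<Longrightarrow> grid_graph a b F"
  unfolding grid_graph_def by blast

lemma grid_graph_subset_Pow: "grid_graph a b E \<Longrightarrow> E \<subseteq> Pow (grid a b)"
  unfolding grid_graph_def by auto

lemma finite_grid_graph:
  assumes "grid_graph a b E"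
  shows "finite E"
proof (rule finite_subset[OF grid_graph_subset_Pow[OF assms]])
  show "finite (Pow (grid a b))" by (simp add: grid_def)
qed

lemma edge_transpose_subset_grid:
  "grid_graph a b E \<Longrightarrow> e \<in> E \<Longrightarrow> edge_transpose e \<subseteq> grid a b"
  by (elim grid_graph_edgeE) (auto simp: edge_transpose_doubleton grid_def)

lemma partial_transpose_eq_image:
  assumes "grid_graph a b E"
  shows "partial_transpose E = edge_transpose ` E"
proof (intro set_eqI iffI)
  fix x assume "x \<in> partial_transpose E"
  then obtain i j k l where x: "x = {(k,j),(i,l)}" and e: "{(i,j),(k,l)} \<in> E"
    unfolding partial_transpose_def by blast
  then have "(i,j) \<noteq> (k,l)" using assms by (auto elim!: grid_graph_edgeE simp: doubleton_eq_iff)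
  then have "x = edge_transpose {(i,j),(k,l)}" using x by (auto simp: edge_transpose_doubleton)
  with e show "x \<in> edge_transpose ` E" by blast
next
  fix x assume "x \<in> edge_transpose ` E"
  then obtain e where "e \<in> E" "x = edge_transpose e" by blast
  moreover obtain p q where "p \<noteq> q" "e = {p, q}"
    using grid_graph_edgeE[OF assms \<open>e \<in> E\<close>] by metis
  ultimately have witness: "x = {(fst q, snd p), (fst p, snd q)} \<and> {(fst p, snd p), (fst q, snd q)} \<in> E"
    by (auto simp: edge_transpose_doubleton)
  then show "x \<in> partial_transpose E"
    unfolding partial_transpose_def by (intro CollectI exI) (rule witness)
qed

lemma inj_on_edge_transpose:
  assumes "grid_graph a b E"
  shows "inj_on edge_transpose E"
proof (rule inj_on_inverseI)
  fix e assume "e \<in> E"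
  then obtain p q where "p \<noteq> q" "e = {p, q}" by (rule grid_graph_edgeE[OF assms])
  then show "edge_transpose (edge_transpose e) = e" by (simp add: edge_transpose_involution)
qed

definition balanced :: "vtx set \<Rightarrow> vtx set set \<Rightarrow> bool" where
  "balanced S E \<longleftrightarrow> (\<forall>v\<in>S. card {e\<in>E. v \<in> e} = card {e\<in>E. v \<in> edge_transpose e})"

lemma degree_criterion_iff_balanced:
  assumes "grid_graph a b E"
  shows "degree_criterion a b E \<longleftrightarrow> balanced (grid a b) E"
proof -
  have "deg (partial_transpose E) v = card {e\<in>E. v \<in> edge_transpose e}" for v
  proof -
    have "{e' \<in> edge_transpose ` E. v \<in> e'} = edge_transpose ` {e\<in>E. v \<in> edge_transpose e}"
      by blast
    moreover have "inj_on edge_transpose {e\<in>E. v \<in> edge_transpose e}"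
      using inj_on_edge_transpose[OF assms] by (rule inj_on_subset) auto
    ultimately show ?thesis
      unfolding deg_def partial_transpose_eq_image[OF assms] by (simp add: card_image)
  qed
  then show ?thesis unfolding degree_criterion_def balanced_def deg_def by simp
qed

lemma balanced_empty [simp]: "balanced S {}"
  unfolding balanced_def by simp

lemma card_filter_Un_disjoint:
  "finite X \<Longrightarrow> finite Y \<Longrightarrow> X \<inter> Y = {} \<Longrightarrow>
    card {e\<in>X \<union> Y. P e} = card {e\<in>X. P e} + card {e\<in>Y. P e}"
proof -
  assume "finite X" "finite Y" "X \<inter> Y = {}"
  moreover have "{e\<in>X \<union> Y. P e} = {e\<in>X. P e} \<union> {e\<in>Y. P e}" by blast
  ultimately show ?thesis by (simp add: card_Un_disjoint disjoint_iff)
qed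

lemma balanced_Un_disjoint:
  assumes "finite X" "finite Y" "X \<inter> Y = {}" "balanced S X" "balanced S Y"
  shows "balanced S (X \<union> Y)"
  using assms(4,5) unfolding balanced_def card_filter_Un_disjoint[OF assms(1-3)] by simp

lemma card_filter_Diff:
  "finite E \<Longrightarrow> X \<subseteq> E \<Longrightarrow> card {e\<in>E - X. P e} = card {e\<in>E. P e} - card {e\<in>X. P e}"
proof -
  assume "finite E" "X \<subseteq> E"
  then have "card ({e\<in>E. P e} - {e\<in>X. P e}) = card {e\<in>E. P e} - card {e\<in>X. P e}"
    by (intro card_Diff_subset) (auto intro: finite_subset)
  moreover have "{e\<in>E - X. P e} = {e\<in>E. P e} - {e\<in>X. P e}" by blast
  ultimately show ?thesis by (simp only:)
qed

lemma balanced_Diff: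
  assumes "finite E" "X \<subseteq> E" "balanced S E" "balanced S X"
  shows "balanced S (E - X)"
  using assms(3,4) unfolding balanced_def card_filter_Diff[OF assms(1,2)] by simp

lemma balanced_Union:
  assumes "finite \<X>" "pairwise disjnt \<X>" "\<And>X. X \<in> \<X> \<Longrightarrow> finite X \<and> balanced S X"
  shows "balanced S (\<Union>\<X>)"
  using assms
proof (induction \<X> rule: finite_induct)
  case (insert X \<X>)
  have "disjnt X Y" if "Y \<in> \<X>" for Y
    using insert.prems(1) insert.hyps(2) that unfolding pairwise_insert by blast
  then have "X \<inter> \<Union>\<X> = {}" by (auto simp: disjnt_def)
  moreover have "balanced S (\<Union>\<X>)"
    using insert.IH pairwise_subset[OF insert.prems(1) subset_insertI] insert.prems(2) by blast
  moreover have "finite X" "balanced S X" using insert.prems(2) by blast+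
  moreover have "finite (\<Union>\<X>)" using insert.hyps(1) insert.prems(2) by (intro finite_Union) simp_all
  ultimately show ?case by (simp add: balanced_Un_disjoint)
qed simp

definition map_edges :: "(vtx \<Rightarrow> vtx) \<Rightarrow> vtx set set \<Rightarrow> vtx set set" where
  "map_edges f E = (\<lambda>e. f ` e) ` E"

lemma rotate_graph_Suc: "rotate_graph (Suc r) B = map_edges rot (rotate_graph r B)"
  unfolding rotate_graph_def map_edges_def by (simp add: image_comp)

lemma grid_graph_map_edges:
  assumes "bij_betw f (grid a b) (grid a b)" "grid_graph a b E"
  shows "grid_graph a b (map_edges f E)"
  unfolding grid_graph_def map_edges_def
proof
  fix e' assume "e' \<in> (\<lambda>e. f ` e) ` E"
  then obtain e where "e \<in> E" "e' = f ` e" by blast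
  moreover obtain p q where "p \<in> grid a b" "q \<in> grid a b" "p \<noteq> q" "e = {p, q}"
    using grid_graph_edgeE[OF assms(2) \<open>e \<in> E\<close>] by metis
  moreover have "f p \<in> grid a b" "f q \<in> grid a b"
    using \<open>p \<in> grid a b\<close> \<open>q \<in> grid a b\<close> bij_betwE[OF assms(1)] by blast+
  moreover have "f p \<noteq> f q"
    using \<open>p \<in> grid a b\<close> \<open>q \<in> grid a b\<close> \<open>p \<noteq> q\<close> bij_betw_imp_inj_on[OF assms(1)]
    by (auto dest: inj_onD)
  moreover have "e' = {f p, f q}" using \<open>e' = f ` e\<close> \<open>e = {p, q}\<close> by simp
  ultimately show "\<exists>u v. u \<in> grid a b \<and> v \<in> grid a b \<and> u \<noteq> v \<and> e' = {u, v}"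
    by blast
qed

lemma card_filter_map_edges:
  assumes "inj_on f (grid a b)" "grid_graph a b E"
    and "\<And>e. e \<in> E \<Longrightarrow> Q (f ` e) \<longleftrightarrow> P e"
  shows "card {e'\<in>map_edges f E. Q e'} = card {e\<in>E. P e}"
proof -
  have "{e'\<in>map_edges f E. Q e'} = (\<lambda>e. f ` e) ` {e\<in>E. P e}"
    unfolding map_edges_def using assms(3) by blast
  moreover have "inj_on (\<lambda>e. f ` e) {e\<in>E. P e}"
    by (rule inj_on_subset[OF inj_on_image_Pow[OF assms(1)]])
       (use grid_graph_subset_Pow[OF assms(2)] in blast)
  ultimately show ?thesis by (simp add: card_image)
qed

lemma balanced_map_edges_iff:
  assumes bij: "bij_betw f (grid a b) (grid a b)" and E: "grid_graph a b E"
    and commute: "\<And>p q. p \<in> grid a b \<Longrightarrow> q \<in> grid a b \<Longrightarrow> p \<noteq> q \<Longrightarrow>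
      edge_transpose {f p, f q} = f ` edge_transpose {p, q}"
  shows "balanced (grid a b) (map_edges f E) \<longleftrightarrow> balanced (grid a b) E"
proof -
  have inj: "inj_on f (grid a b)" using bij by (rule bij_betw_imp_inj_on)
  have mem: "f v \<in> f ` e \<longleftrightarrow> v \<in> e"
    and mem_transpose: "f v \<in> edge_transpose (f ` e) \<longleftrightarrow> v \<in> edge_transpose e"
    if v: "v \<in> grid a b" and e: "e \<in> E" for v e
  proof -
    obtain p q where pq: "p \<in> grid a b" "q \<in> grid a b" "p \<noteq> q" and e_eq: "e = {p, q}"
      using grid_graph_edgeE[OF E e] by metis
    have "e \<subseteq> grid a b" using pq e_eq by simp
    then show "f v \<in> f ` e \<longleftrightarrow> v \<in> e" by (rule inj_on_image_mem_iff[OF inj v])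
    have "edge_transpose (f ` e) = f ` edge_transpose e"
      using commute[OF pq] e_eq by simp
    then show "f v \<in> edge_transpose (f ` e) \<longleftrightarrow> v \<in> edge_transpose e"
      using inj_on_image_mem_iff[OF inj v edge_transpose_subset_grid[OF E e]] by simp
  qed
  have count: "card {e'\<in>map_edges f E. f v \<in> e'} = card {e\<in>E. v \<in> e}"
    if "v \<in> grid a b" for v
    by (rule card_filter_map_edges[OF inj E]) (rule mem[OF that])
  have count_transpose:
    "card {e'\<in>map_edges f E. f v \<in> edge_transpose e'} = card {e\<in>E. v \<in> edge_transpose e}"
    if "v \<in> grid a b" for v
    by (rule card_filter_map_edges[OF inj E]) (rule mem_transpose[OF that])
  have reindex: "(\<forall>w\<in>grid a b. R w) \<longleftrightarrow> (\<forall>v\<in>grid a b. R (f v))" for R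
  proof -
    have "(\<forall>w\<in>f ` grid a b. R w) \<longleftrightarrow> (\<forall>v\<in>grid a b. R (f v))" by simp
    then show ?thesis by (simp only: bij_betw_imp_surj_on[OF bij])
  qed
  have "balanced (grid a b) (map_edges f E) \<longleftrightarrow> (\<forall>v\<in>grid a b.
      card {e'\<in>map_edges f E. f v \<in> e'} = card {e'\<in>map_edges f E. f v \<in> edge_transpose e'})"
    unfolding balanced_def
    by (rule reindex[where R = "\<lambda>w. card {e'\<in>map_edges f E. w \<in> e'} =
      card {e'\<in>map_edges f E. w \<in> edge_transpose e'}"])
  also have "\<dots> \<longleftrightarrow> balanced (grid a b) E"
    unfolding balanced_def by (intro ball_cong refl) (simp only: count count_transpose)
  finally show ?thesis .
qed

lemma bij_betw_rot: "bij_betw rot (grid 3 3) (grid 3 3)"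
proof (rule bij_betwI[where g = "\<lambda>(i, j). (4 - j, i)"])
qed (auto simp: rot_def grid_def)

lemma edge_transpose_rot:
  assumes "p \<noteq> q" "rot p \<noteq> rot q"
  shows "edge_transpose {rot p, rot q} = rot ` edge_transpose {p, q}"
  using assms by (auto simp: edge_transpose_doubleton rot_def)

lemma grid_graph_balanced_rotate_graph:
  assumes "grid_graph 3 3 B" "balanced (grid 3 3) B"
  shows "grid_graph 3 3 (rotate_graph r B) \<and> balanced (grid 3 3) (rotate_graph r B)"
proof (induction r)
  case 0
  then show ?case using assms by (simp add: rotate_graph_def)
next
  case (Suc r)
  then have graph: "grid_graph 3 3 (rotate_graph r B)" by blast
  have "edge_transpose {rot p, rot q} = rot ` edge_transpose {p, q}"
    if "p \<in> grid 3 3" "q \<in> grid 3 3" "p \<noteq> q" for p q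
  proof (rule edge_transpose_rot)
    show "rot p \<noteq> rot q"
      using that bij_betw_imp_inj_on[OF bij_betw_rot] by (auto dest: inj_onD)
  qed (fact that)
  then have "balanced (grid 3 3) (map_edges rot (rotate_graph r B)) \<longleftrightarrow>
      balanced (grid 3 3) (rotate_graph r B)"
    by (rule balanced_map_edges_iff[OF bij_betw_rot graph])
  then show ?case
    using Suc.IH grid_graph_map_edges[OF bij_betw_rot graph] unfolding rotate_graph_Suc by simp
qed

definition grid_map :: "(nat \<Rightarrow> nat) \<Rightarrow> (nat \<Rightarrow> nat) \<Rightarrow> vtx \<Rightarrow> vtx" where
  "grid_map \<pi> \<sigma> p = (\<pi> (fst p), \<sigma> (snd p))"

lemma bij_betw_grid_map:
  assumes "\<pi> permutes {1..a}" "\<sigma> permutes {1..b}"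
  shows "bij_betw (grid_map \<pi> \<sigma>) (grid a b) (grid a b)"
proof -
  have "bij_betw (map_prod \<pi> \<sigma>) ({1..a} \<times> {1..b}) ({1..a} \<times> {1..b})"
    using assms by (intro bij_betw_map_prod permutes_imp_bij)
  moreover have "grid_map \<pi> \<sigma> = map_prod \<pi> \<sigma>" by (auto simp: grid_map_def)
  ultimately show ?thesis unfolding grid_def by (simp only:)
qed

lemma edge_transpose_grid_map:
  "p \<noteq> q \<Longrightarrow> grid_map \<pi> \<sigma> p \<noteq> grid_map \<pi> \<sigma> q \<Longrightarrow>
    edge_transpose {grid_map \<pi> \<sigma> p, grid_map \<pi> \<sigma> q} = grid_map \<pi> \<sigma> ` edge_transpose {p, q}"
  by (simp add: edge_transpose_doubleton grid_map_def)

lemma balanced_map_edges_grid_map_iff: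
  assumes "\<pi> permutes {1..a}" "\<sigma> permutes {1..b}" "grid_graph a b E"
  shows "balanced (grid a b) (map_edges (grid_map \<pi> \<sigma>) E) \<longleftrightarrow> balanced (grid a b) E"
proof (rule balanced_map_edges_iff[OF bij_betw_grid_map[OF assms(1,2)] assms(3)])
  fix p q assume "p \<in> grid a b" "q \<in> grid a b" "p \<noteq> q"
  then have "grid_map \<pi> \<sigma> p \<noteq> grid_map \<pi> \<sigma> q"
    using bij_betw_imp_inj_on[OF bij_betw_grid_map[OF assms(1,2)]] by (auto dest: inj_onD)
  then show "edge_transpose {grid_map \<pi> \<sigma> p, grid_map \<pi> \<sigma> q} =
      grid_map \<pi> \<sigma> ` edge_transpose {p, q}"
    by (rule edge_transpose_grid_map[OF \<open>p \<noteq> q\<close>])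
qed

lemma locally_isomorphic_map_edges_grid_map:
  assumes "\<pi> permutes {1..a}" "\<sigma> permutes {1..b}"
  shows "locally_isomorphic a b (map_edges (grid_map \<pi> \<sigma>) H) H"
  unfolding locally_isomorphic_def
proof (intro exI conjI ballI)
  show "inv \<pi> permutes {1..a}" "inv \<sigma> permutes {1..b}"
    using assms by (simp_all add: permutes_inv)
  let ?F = "\<lambda>e. grid_map \<pi> \<sigma> ` e"
  have "inj (grid_map \<pi> \<sigma>)"
    unfolding inj_def grid_map_def
    using permutes_inj[OF assms(1)] permutes_inj[OF assms(2)] by (simp add: inj_eq prod_eq_iff)
  then have inj_image: "inj ?F"
    using inj_on_image_Pow[of "grid_map \<pi> \<sigma>" UNIV] by simp
  fix i j k l
  let ?e = "{(inv \<pi> i, inv \<sigma> j), (inv \<pi> k, inv \<sigma> l)}"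
  have "?F ?e = {(i, j), (k, l)}"
    using permutes_inverses(1)[OF assms(1)] permutes_inverses(1)[OF assms(2)]
    by (simp add: grid_map_def)
  moreover have "?F ?e \<in> ?F ` H \<longleftrightarrow> ?e \<in> H"
    by (rule inj_image_mem_iff[OF inj_image])
  ultimately show "{(i, j), (k, l)} \<in> map_edges (grid_map \<pi> \<sigma>) H \<longleftrightarrow> ?e \<in> H"
    unfolding map_edges_def by simp
qed

lemma locally_isomorphic_imp_map_edges:
  assumes iso: "locally_isomorphic a b X H" and X: "grid_graph a b X" and H: "grid_graph a b H"
  obtains \<pi> \<sigma> where "\<pi> permutes {1..a}" "\<sigma> permutes {1..b}" "H = map_edges (grid_map \<pi> \<sigma>) X"
proof -
  obtain \<pi> \<sigma> where perms: "\<pi> permutes {1..a}" "\<sigma> permutes {1..b}" and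
    edges: "\<forall>i\<in>{1..a}. \<forall>j\<in>{1..b}. \<forall>k\<in>{1..a}. \<forall>l\<in>{1..b}.
      {(i,j),(k,l)} \<in> X \<longleftrightarrow> {(\<pi> i, \<sigma> j),(\<pi> k, \<sigma> l)} \<in> H"
    using iso unfolding locally_isomorphic_def by blast
  let ?g = "grid_map \<pi> \<sigma>"
  have edge_iff: "{p, q} \<in> X \<longleftrightarrow> {?g p, ?g q} \<in> H" if "p \<in> grid a b" "q \<in> grid a b" for p q
  proof -
    obtain i j k l where "p = (i, j)" "q = (k, l)" by (cases p, cases q)
    with that edges show ?thesis by (simp add: grid_def grid_map_def)
  qed
  have onto: "?g ` grid a b = grid a b"
    using bij_betw_grid_map[OF perms] by (simp add: bij_betw_def)
  have "H = map_edges ?g X"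
  proof (intro set_eqI iffI)
    fix e assume "e \<in> H"
    obtain p' q' where "p' \<in> grid a b" "q' \<in> grid a b" "e = {p', q'}"
      by (rule grid_graph_edgeE[OF H \<open>e \<in> H\<close>])
    then have "p' \<in> ?g ` grid a b" "q' \<in> ?g ` grid a b" by (simp_all only: onto)
    then obtain p q where pq: "p \<in> grid a b" "q \<in> grid a b" "p' = ?g p" "q' = ?g q"
      by blast
    with \<open>e = {p', q'}\<close> have e: "e = ?g ` {p, q}" by simp
    then have "{p, q} \<in> X" using edge_iff pq \<open>e \<in> H\<close> by simp
    with e show "e \<in> map_edges ?g X" unfolding map_edges_def by blast
  next
    fix e assume "e \<in> map_edges ?g X"
    then obtain e' where "e' \<in> X" and e: "e = ?g ` e'" unfolding map_edges_def by blast
    obtain p q where "p \<in> grid a b" "q \<in> grid a b" "e' = {p, q}"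
      by (rule grid_graph_edgeE[OF X \<open>e' \<in> X\<close>])
    with \<open>e' \<in> X\<close> e edge_iff show "e \<in> H" by simp
  qed
  with perms that show ?thesis by blast
qed

text \<open>The diagonal edges of the 3x3 grid, listed so that entries \<open>2 * s\<close> and \<open>2 * s + 1\<close> are the
  two diagonals of the \<open>s\<close>-th 2x2 sub-square, squares ordered row-major by their row pair and
  column pair.\<close>
definition diagonal_edges :: "vtx set list" where
  "diagonal_edges =
    [{(1,1),(2,2)}, {(1,2),(2,1)},
     {(1,1),(2,3)}, {(1,3),(2,1)},
     {(1,2),(2,3)}, {(1,3),(2,2)},
     {(1,1),(3,2)}, {(1,2),(3,1)},
     {(1,1),(3,3)}, {(1,3),(3,1)},
     {(1,2),(3,3)}, {(1,3),(3,2)},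
     {(2,1),(3,2)}, {(2,2),(3,1)},
     {(2,1),(3,3)}, {(2,3),(3,1)},
     {(2,2),(3,3)}, {(2,3),(3,2)}]"

lemma distinct_diagonal_edges: "distinct diagonal_edges"
  by (simp add: diagonal_edges_def doubleton_eq_iff)

lemma length_diagonal_edges: "length diagonal_edges = 18"
  by (simp add: diagonal_edges_def)

lemma grid_graph_diagonal_edges: "grid_graph 3 3 (set diagonal_edges)"
  unfolding diagonal_edges_def list.set
  by (intro grid_graph_insert grid_graph_empty) (simp_all add: grid_def)

lemma edge_transpose_diagonal_edges:
  assumes "s < 9"
  shows "edge_transpose (diagonal_edges ! (2 * s)) = diagonal_edges ! (2 * s + 1)"
    and "edge_transpose (diagonal_edges ! (2 * s + 1)) = diagonal_edges ! (2 * s)"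
  using assms
  by (auto simp: less_Suc_eq numeral_eq_Suc diagonal_edges_def edge_transpose_doubleton insert_commute)

lemma sum_lessThan_double: "(\<Sum>k<2 * (n::nat). f k) = (\<Sum>s<n. f (2 * s) + f (2 * s + 1))"
  by (induction n) (simp_all add: sum.lessThan_Suc algebra_simps)

lemma card_filter_diagonal_edges:
  assumes "E \<subseteq> set diagonal_edges"
  shows "int (card {e\<in>E. P e}) =
    (\<Sum>k<18. of_bool (diagonal_edges ! k \<in> E) * of_bool (P (diagonal_edges ! k)))"
proof -
  let ?K = "{k\<in>{..<18}. diagonal_edges ! k \<in> E \<and> P (diagonal_edges ! k)}"
  have "{e\<in>E. P e} = (!) diagonal_edges ` ?K"
  proof (intro set_eqI iffI)
    fix e assume e: "e \<in> {e\<in>E. P e}"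
    then have "e \<in> set diagonal_edges" using assms by blast
    then obtain k where "k < 18" "e = diagonal_edges ! k"
      by (metis in_set_conv_nth length_diagonal_edges)
    with e show "e \<in> (!) diagonal_edges ` ?K" by auto
  qed auto
  moreover have "inj_on ((!) diagonal_edges) ?K"
    using distinct_diagonal_edges by (auto simp: inj_on_def nth_eq_iff_index_eq length_diagonal_edges)
  ultimately have "int (card {e\<in>E. P e}) = (\<Sum>k\<in>?K. 1)" by (simp add: card_image)
  also have "\<dots> = (\<Sum>k<18. if diagonal_edges ! k \<in> E \<and> P (diagonal_edges ! k) then 1 else 0)"
    by (rule sum.inter_filter) simp
  also have "\<dots> = (\<Sum>k<18. of_bool (diagonal_edges ! k \<in> E) * of_bool (P (diagonal_edges ! k)))"
    by (intro sum.cong refl) simp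
  finally show ?thesis .
qed

definition square_sign :: "vtx set set \<Rightarrow> nat \<Rightarrow> int" where
  "square_sign E s =
    of_bool (diagonal_edges ! (2 * s) \<in> E) - of_bool (diagonal_edges ! (2 * s + 1) \<in> E)"

lemma degree_difference_eq_square_signs:
  assumes "E \<subseteq> set diagonal_edges"
  shows "int (card {e\<in>E. v \<in> e}) - int (card {e\<in>E. v \<in> edge_transpose e}) =
    (\<Sum>s<9. (of_bool (v \<in> diagonal_edges ! (2 * s)) - of_bool (v \<in> diagonal_edges ! (2 * s + 1)))
      * square_sign E s)"
proof -
  have "int (card {e\<in>E. v \<in> e}) - int (card {e\<in>E. v \<in> edge_transpose e}) =
    (\<Sum>k<18. of_bool (diagonal_edges ! k \<in> E) *
      (of_bool (v \<in> diagonal_edges ! k) - of_bool (v \<in> edge_transpose (diagonal_edges ! k))))"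
    unfolding card_filter_diagonal_edges[OF assms] sum_subtractf[symmetric] right_diff_distrib ..
  also have "\<dots> = (\<Sum>k<2 * 9. of_bool (diagonal_edges ! k \<in> E) *
      (of_bool (v \<in> diagonal_edges ! k) - of_bool (v \<in> edge_transpose (diagonal_edges ! k))))"
    by simp
  also have "\<dots> = (\<Sum>s<9. (of_bool (v \<in> diagonal_edges ! (2 * s)) -
      of_bool (v \<in> diagonal_edges ! (2 * s + 1))) * square_sign E s)"
    unfolding sum_lessThan_double
  proof (intro sum.cong refl)
    fix s :: nat assume "s \<in> {..<9}"
    then have s: "s < 9" by simp
    show "of_bool (diagonal_edges ! (2 * s) \<in> E) *
        (of_bool (v \<in> diagonal_edges ! (2 * s)) -
          of_bool (v \<in> edge_transpose (diagonal_edges ! (2 * s)))) +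
      of_bool (diagonal_edges ! (2 * s + 1) \<in> E) *
        (of_bool (v \<in> diagonal_edges ! (2 * s + 1)) -
          of_bool (v \<in> edge_transpose (diagonal_edges ! (2 * s + 1)))) =
      (of_bool (v \<in> diagonal_edges ! (2 * s)) - of_bool (v \<in> diagonal_edges ! (2 * s + 1))) *
        square_sign E s"
      unfolding edge_transpose_diagonal_edges[OF s] square_sign_def by (simp add: algebra_simps)
  qed
  finally show ?thesis .
qed

definition square_equations :: "(nat \<Rightarrow> int) \<Rightarrow> bool" where
  "square_equations z \<longleftrightarrow> (\<forall>v\<in>grid 3 3.
    (\<Sum>s<9. (of_bool (v \<in> diagonal_edges ! (2 * s)) -
      of_bool (v \<in> diagonal_edges ! (2 * s + 1))) * z s) = 0)"

lemma balanced_iff_square_equations: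
  assumes "E \<subseteq> set diagonal_edges"
  shows "balanced (grid 3 3) E \<longleftrightarrow> square_equations (square_sign E)"
  unfolding balanced_def square_equations_def degree_difference_eq_square_signs[OF assms, symmetric]
  by simp

lemma square_equations_iff:
  "square_equations z \<longleftrightarrow>
     z 0 + z 1 + z 3 + z 4 = 0
     \<and> - z 0 + z 2 - z 3 + z 5 = 0
     \<and> - z 1 - z 2 - z 4 - z 5 = 0
     \<and> - z 0 - z 1 + z 6 + z 7 = 0
     \<and> z 0 - z 2 - z 6 + z 8 = 0
     \<and> z 1 + z 2 - z 7 - z 8 = 0
     \<and> - z 3 - z 4 - z 6 - z 7 = 0
     \<and> z 3 - z 5 + z 6 - z 8 = 0
     \<and> z 4 + z 5 + z 7 + z 8 = 0"
proof -
  have "{1..3::nat} = {1, 2, 3}" by auto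
  then show ?thesis
    unfolding square_equations_def grid_def
    by (simp add: numeral_eq_Suc diagonal_edges_def)
qed

text \<open>Each entry \<open>(ks, \<pi>, \<sigma>, r, B)\<close> lists the positions \<open>ks\<close> in \<open>diagonal_edges\<close> of the edges of
  a copy of a building block, together with the row and column permutations and the rotation
  exhibiting it as a copy of \<open>B\<close>.\<close>
definition block_table ::
    "(nat list \<times> (nat \<Rightarrow> nat) \<times> (nat \<Rightarrow> nat) \<times> nat \<times> vtx set set) list" where
  "block_table =
    [([0,1], id, id, 0, B2),
     ([2,3], id, (transpose 2 3), 0, B2),
     ([4,5], id, (transpose 1 3), 0, B2),
     ([6,7], (transpose 2 3), id, 0, B2),
     ([8,9], (transpose 2 3), (transpose 2 3), 0, B2),
     ([10,11], (transpose 2 3), (transpose 1 3), 0, B2),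
     ([12,13], (transpose 1 3), id, 0, B2),
     ([14,15], (transpose 1 3), (transpose 2 3), 0, B2),
     ([16,17], (transpose 1 3), (transpose 1 3), 0, B2),
     ([0,3,4], id, id, 0, B3),
     ([0,7,12], id, (transpose 1 3), 1, B3),
     ([1,2,5], id, (transpose 1 2), 0, B3),
     ([1,6,13], id, (transpose 2 3 \<circ> transpose 1 2), 1, B3),
     ([2,9,14], id, (transpose 1 2 \<circ> transpose 2 3), 1, B3),
     ([3,8,15], id, (transpose 1 2), 1, B3),
     ([4,11,16], id, (transpose 2 3), 1, B3),
     ([5,10,17], id, id, 1, B3),
     ([6,9,10], (transpose 2 3), id, 0, B3),
     ([7,8,11], (transpose 2 3), (transpose 1 2), 0, B3),
     ([12,15,16], (transpose 1 3), (transpose 1 2), 0, B3),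
     ([13,14,17], (transpose 1 3), id, 0, B3),
     ([0,3,10,17], (transpose 2 3), (transpose 1 2), 0, B4),
     ([0,4,9,14], (transpose 2 3), (transpose 1 3), 0, B4),
     ([0,7,14,17], (transpose 1 2), (transpose 1 2 \<circ> transpose 2 3), 0, B4),
     ([0,9,10,12], id, (transpose 2 3), 0, B4),
     ([1,2,11,16], (transpose 2 3), (transpose 2 3 \<circ> transpose 1 2), 0, B4),
     ([1,5,8,15], (transpose 2 3), id, 0, B4),
     ([1,6,15,16], (transpose 1 2), (transpose 2 3), 0, B4),
     ([1,8,11,13], id, (transpose 1 2 \<circ> transpose 2 3), 0, B4),
     ([2,5,7,12], (transpose 2 3), (transpose 1 2 \<circ> transpose 2 3), 0, B4),
     ([2,7,11,14], id, id, 0, B4),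
     ([2,9,12,16], (transpose 1 2), (transpose 1 3), 0, B4),
     ([3,4,6,13], (transpose 2 3), (transpose 2 3), 0, B4),
     ([3,6,10,15], id, (transpose 1 3), 0, B4),
     ([3,8,13,17], (transpose 1 2), id, 0, B4),
     ([4,6,9,16], id, (transpose 1 2), 0, B4),
     ([4,11,13,14], (transpose 1 2), (transpose 2 3 \<circ> transpose 1 2), 0, B4),
     ([5,7,8,17], id, (transpose 2 3 \<circ> transpose 1 2), 0, B4),
     ([5,10,12,15], (transpose 1 2), (transpose 1 2), 0, B4),
     ([0,3,7,8,17], (transpose 1 2), (transpose 2 3 \<circ> transpose 1 2), 0, B5),
     ([0,3,10,12,15], id, (transpose 1 2), 0, B5),
     ([0,4,7,11,14], (transpose 1 2), id, 0, B5),
     ([0,4,9,12,16], id, (transpose 1 3), 0, B5),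
     ([0,9,10,14,17], (transpose 2 3), (transpose 2 3), 0, B5),
     ([1,2,6,9,16], (transpose 1 2), (transpose 1 2), 0, B5),
     ([1,2,11,13,14], id, (transpose 2 3 \<circ> transpose 1 2), 0, B5),
     ([1,5,6,10,15], (transpose 1 2), (transpose 1 3), 0, B5),
     ([1,5,8,13,17], id, id, 0, B5),
     ([1,8,11,15,16], (transpose 2 3), (transpose 1 2 \<circ> transpose 2 3), 0, B5),
     ([2,5,7,14,17], id, (transpose 1 2 \<circ> transpose 2 3), 0, B5),
     ([2,5,9,10,12], (transpose 1 2), (transpose 2 3), 0, B5),
     ([2,7,11,12,16], (transpose 2 3), id, 0, B5),
     ([3,4,6,15,16], id, (transpose 2 3), 0, B5),
     ([3,4,8,11,13], (transpose 1 2), (transpose 1 2 \<circ> transpose 2 3), 0, B5),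
     ([3,6,10,13,17], (transpose 2 3), (transpose 1 3), 0, B5),
     ([4,6,9,13,14], (transpose 2 3), (transpose 1 2), 0, B5),
     ([5,7,8,12,15], (transpose 2 3), (transpose 2 3 \<circ> transpose 1 2), 0, B5)]"

definition block_indices :: "nat list list" where
  "block_indices = map fst block_table"

text \<open>Apart from the pairs, every block meets each square in at most one diagonal, so a sign vector
  matching its pattern forces all its edges to be present.\<close>
lemma square_equations_solution_contains_pattern:
  fixes z :: "nat \<Rightarrow> int"
  assumes "square_equations z" "\<forall>s<9. \<bar>z s\<bar> \<le> 1" "\<exists>s<9. z s \<noteq> 0"
  shows "\<exists>ks\<in>set block_indices. \<forall>k\<in>set ks. z (k div 2) = (if even k then 1 else -1)"
proof -
  note equations = assms(1)[unfolded square_equations_iff]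
  have bounds: "\<bar>z 0\<bar> \<le> 1" "\<bar>z 1\<bar> \<le> 1" "\<bar>z 2\<bar> \<le> 1" "\<bar>z 3\<bar> \<le> 1" "\<bar>z 4\<bar> \<le> 1"
    "\<bar>z 5\<bar> \<le> 1" "\<bar>z 6\<bar> \<le> 1" "\<bar>z 7\<bar> \<le> 1" "\<bar>z 8\<bar> \<le> 1"
    using assms(2) by simp_all
  have nonzero: "z 0 \<noteq> 0 \<or> z 1 \<noteq> 0 \<or> z 2 \<noteq> 0 \<or> z 3 \<noteq> 0 \<or> z 4 \<noteq> 0 \<or>
      z 5 \<noteq> 0 \<or> z 6 \<noteq> 0 \<or> z 7 \<noteq> 0 \<or> z 8 \<noteq> 0"
    using assms(3) by (simp add: Ex_less_Suc numeral_eq_Suc) blast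
  show ?thesis
    unfolding block_indices_def block_table_def
    using equations bounds nonzero by simp (smt (z3))
qed

lemma block_table_sound:
  assumes "(ks, \<pi>, \<sigma>, r, B) \<in> set block_table"
  shows "\<pi> permutes {1..3} \<and> \<sigma> permutes {1..3} \<and> B \<in> {B2, B3, B4, B5} \<and>
    set (map ((!) diagonal_edges) ks) = map_edges (grid_map \<pi> \<sigma>) (rotate_graph r B)"
proof -
  note entry = assms[unfolded block_table_def list.set insert_iff empty_iff prod.inject]
  have "\<pi> permutes {1..3} \<and> \<sigma> permutes {1..3} \<and> B \<in> {B2, B3, B4, B5}"
    using entry by (elim disjE conjE) (auto intro!: permutes_compose permutes_swap_id)
  moreover have "set (map ((!) diagonal_edges) ks) = map_edges (grid_map \<pi> \<sigma>) (rotate_graph r B)"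
    using entry
    by (elim disjE conjE) (simp_all add: diagonal_edges_def map_edges_def rotate_graph_def
        B2_def B3_def B4_def B5_def grid_map_def rot_def transpose_def numeral_eq_Suc insert_commute)
  ultimately show ?thesis by blast
qed

lemma building_blocks_subset_diagonal_edges:
  "B2 \<subseteq> set diagonal_edges" "B3 \<subseteq> set diagonal_edges"
  "B4 \<subseteq> set diagonal_edges" "B5 \<subseteq> set diagonal_edges"
  by (simp_all add: B2_def B3_def B4_def B5_def diagonal_edges_def doubleton_eq_iff)

lemma building_blocks_square_equations:
  "square_equations (square_sign B2)" "square_equations (square_sign B3)"
  "square_equations (square_sign B4)" "square_equations (square_sign B5)"
  unfolding square_equations_iff square_sign_def
  by (simp_all add: B2_def B3_def B4_def B5_def diagonal_edges_def doubleton_eq_iff)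

lemma building_blocks_grid_graph_balanced:
  assumes "B \<in> {B2, B3, B4, B5}"
  shows "grid_graph 3 3 B \<and> balanced (grid 3 3) B"
proof -
  have "B \<subseteq> set diagonal_edges" "square_equations (square_sign B)"
    using assms building_blocks_subset_diagonal_edges building_blocks_square_equations by auto
  then show ?thesis
    using grid_graph_mono[OF grid_graph_diagonal_edges] balanced_iff_square_equations by blast
qed

definition building_block_copy :: "vtx set set \<Rightarrow> bool" where
  "building_block_copy X \<longleftrightarrow> grid_graph 3 3 X \<and>
    (\<exists>B\<in>{B2, B3, B4, B5}. \<exists>H. is_rotation H B \<and> locally_isomorphic 3 3 X H)"

lemma building_block_copy_balanced:
  assumes "building_block_copy X"
  shows "balanced (grid 3 3) X"
proof -
  obtain B r where B: "B \<in> {B2, B3, B4, B5}" and X: "grid_graph 3 3 X"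
    and iso: "locally_isomorphic 3 3 X (rotate_graph r B)"
    using assms unfolding building_block_copy_def is_rotation_def by blast
  have H: "grid_graph 3 3 (rotate_graph r B) \<and> balanced (grid 3 3) (rotate_graph r B)"
    using grid_graph_balanced_rotate_graph building_blocks_grid_graph_balanced[OF B] by blast
  then obtain \<pi> \<sigma> where "\<pi> permutes {1..3}" "\<sigma> permutes {1..3}"
    "rotate_graph r B = map_edges (grid_map \<pi> \<sigma>) X"
    using locally_isomorphic_imp_map_edges[OF iso X] by blast
  with H X show ?thesis using balanced_map_edges_grid_map_iff by metis
qed

lemma building_block_copy_block_index:
  assumes "ks \<in> set block_indices"
  shows "building_block_copy (set (map ((!) diagonal_edges) ks))"
proof -
  obtain \<pi> \<sigma> r B where "(ks, \<pi>, \<sigma>, r, B) \<in> set block_table"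
    using assms unfolding block_indices_def by auto
  then have perms: "\<pi> permutes {1..3}" "\<sigma> permutes {1..3}" and B: "B \<in> {B2, B3, B4, B5}"
    and X: "set (map ((!) diagonal_edges) ks) = map_edges (grid_map \<pi> \<sigma>) (rotate_graph r B)"
    using block_table_sound by blast+
  have "grid_graph 3 3 (rotate_graph r B)"
    using grid_graph_balanced_rotate_graph building_blocks_grid_graph_balanced[OF B] by blast
  then have "grid_graph 3 3 (map_edges (grid_map \<pi> \<sigma>) (rotate_graph r B))"
    by (rule grid_graph_map_edges[OF bij_betw_grid_map[OF perms]])
  moreover have "locally_isomorphic 3 3 (map_edges (grid_map \<pi> \<sigma>) (rotate_graph r B)) (rotate_graph r B)"
    by (rule locally_isomorphic_map_edges_grid_map[OF perms])
  ultimately show ?thesis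
    unfolding X building_block_copy_def is_rotation_def using B by blast
qed

lemma pair_blocks_in_block_indices: "s < 9 \<Longrightarrow> [2 * s, 2 * s + 1] \<in> set block_indices"
  by (auto simp: less_Suc_eq numeral_eq_Suc block_indices_def block_table_def)

lemma block_indices_nonempty: "ks \<in> set block_indices \<Longrightarrow> ks \<noteq> []"
  by (auto simp: block_indices_def block_table_def)

lemma balanced_contains_block:
  assumes sub: "E \<subseteq> set diagonal_edges" and bal: "balanced (grid 3 3) E" and "E \<noteq> {}"
  obtains ks where "ks \<in> set block_indices" "set (map ((!) diagonal_edges) ks) \<subseteq> E"
proof (cases "\<exists>s<9. diagonal_edges ! (2 * s) \<in> E \<and> diagonal_edges ! (2 * s + 1) \<in> E")
  case True
  then obtain s where "s < 9" "diagonal_edges ! (2 * s) \<in> E" "diagonal_edges ! (2 * s + 1) \<in> E"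
    by blast
  then show ?thesis by (intro that[OF pair_blocks_in_block_indices[OF \<open>s < 9\<close>]]) simp
next
  case False
  let ?z = "square_sign E"
  have "\<forall>s<9. \<bar>?z s\<bar> \<le> 1" by (simp add: square_sign_def)
  moreover have "\<exists>s<9. ?z s \<noteq> 0"
  proof -
    obtain e where "e \<in> E" using \<open>E \<noteq> {}\<close> by blast
    then have "e \<in> set diagonal_edges" using sub by blast
    then obtain k where k: "k < 18" "diagonal_edges ! k = e"
      by (metis in_set_conv_nth length_diagonal_edges)
    have "k div 2 < 9" using k(1) by simp
    moreover have "k = 2 * (k div 2) \<or> k = 2 * (k div 2) + 1" by presburger
    moreover have "\<not> (diagonal_edges ! (2 * (k div 2)) \<in> E \<and> diagonal_edges ! (2 * (k div 2) + 1) \<in> E)"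
      using False \<open>k div 2 < 9\<close> by blast
    ultimately have "?z (k div 2) \<noteq> 0"
      using k(2) \<open>e \<in> E\<close> unfolding square_sign_def by (elim disjE) (metis of_bool_eq_iff eq_iff_diff_eq_0)+
    with \<open>k div 2 < 9\<close> show ?thesis by blast
  qed
  ultimately obtain ks where ks: "ks \<in> set block_indices"
    and signs: "\<forall>k\<in>set ks. ?z (k div 2) = (if even k then 1 else -1)"
    using square_equations_solution_contains_pattern[of ?z] bal
      balanced_iff_square_equations[OF sub] by blast
  have "diagonal_edges ! k \<in> E" if "k \<in> set ks" for k
  proof (cases "even k")
    case True
    with signs that have "?z (k div 2) = 1" by simp
    then have "diagonal_edges ! (2 * (k div 2)) \<in> E"
      by (simp add: square_sign_def of_bool_def split: if_splits)
    with True show ?thesis by simp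
  next
    case False
    with signs that have "?z (k div 2) = -1" by simp
    then have "diagonal_edges ! (2 * (k div 2) + 1) \<in> E"
      by (simp add: square_sign_def of_bool_def split: if_splits)
    with False show ?thesis by simp
  qed
  then show ?thesis using that ks by auto
qed

lemma balanced_block_decomposition:
  assumes "E \<subseteq> set diagonal_edges" "balanced (grid 3 3) E"
  shows "\<exists>\<X>. finite \<X> \<and> pairwise disjnt \<X> \<and> \<Union>\<X> = E \<and> (\<forall>X\<in>\<X>. building_block_copy X)"
proof -
  have "finite E" using assms(1) finite_set by (rule finite_subset)
  then show ?thesis
    using assms
  proof (induction E rule: finite_psubset_induct)
    case (psubset E)
    show ?case
    proof (cases "E = {}")
      case True
      then show ?thesis by (intro exI[of _ "{}"]) simp
    next
      case False
      then obtain ks where ks: "ks \<in> set block_indices"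
        and "set (map ((!) diagonal_edges) ks) \<subseteq> E"
        using balanced_contains_block[OF psubset.prems] by blast
      moreover define X where "X = set (map ((!) diagonal_edges) ks)"
      ultimately have XE: "X \<subseteq> E" by simp
      have copy: "building_block_copy X"
        unfolding X_def by (rule building_block_copy_block_index[OF ks])
      have "X \<noteq> {}" using block_indices_nonempty[OF ks] by (simp add: X_def)
      then have smaller: "E - X \<subset> E" using XE by blast
      have "E - X \<subseteq> set diagonal_edges" using psubset.prems(1) by blast
      moreover have "balanced (grid 3 3) (E - X)"
        by (rule balanced_Diff[OF psubset.hyps(1) XE psubset.prems(2)
              building_block_copy_balanced[OF copy]])
      ultimately obtain \<X> where \<X>: "finite \<X>" "pairwise disjnt \<X>" "\<Union>\<X> = E - X"
        "\<forall>Y\<in>\<X>. building_block_copy Y"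
        using psubset.IH[OF smaller] by blast
      have "disjnt X Y" if "Y \<in> \<X>" for Y
        using that \<X>(3) unfolding disjnt_def by blast
      then have "pairwise disjnt (insert X \<X>)"
        using \<X>(2) by (simp add: pairwise_insert disjnt_sym)
      moreover have "\<Union>(insert X \<X>) = E" using \<X>(3) XE by auto
      moreover have "finite (insert X \<X>)" "\<forall>Y\<in>insert X \<X>. building_block_copy Y"
        using \<X>(1,4) copy by simp_all
      ultimately show ?thesis by blast
    qed
  qed
qed

lemma balanced_iff_block_decomposition:
  assumes "E \<subseteq> set diagonal_edges"
  shows "balanced (grid 3 3) E \<longleftrightarrow>
    (\<exists>\<X>. finite \<X> \<and> pairwise disjnt \<X> \<and> \<Union>\<X> = E \<and> (\<forall>X\<in>\<X>. building_block_copy X))"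
proof
  assume "\<exists>\<X>. finite \<X> \<and> pairwise disjnt \<X> \<and> \<Union>\<X> = E \<and> (\<forall>X\<in>\<X>. building_block_copy X)"
  then obtain \<X> where "finite \<X>" "pairwise disjnt \<X>" "\<Union>\<X> = E" "\<forall>X\<in>\<X>. building_block_copy X"
    by blast
  moreover have "finite X \<and> balanced (grid 3 3) X" if "X \<in> \<X>" for X
    using that \<open>\<forall>X\<in>\<X>. building_block_copy X\<close> finite_grid_graph building_block_copy_balanced
    unfolding building_block_copy_def by blast
  ultimately show "balanced (grid 3 3) E"
    using balanced_Union[of \<X>] by blast
qed (rule balanced_block_decomposition[OF assms])

lemma diagonal_doubleton_in_diagonal_edges:
  "\<forall>i\<in>{1,2,3}. \<forall>j\<in>{1,2,3}. \<forall>k\<in>{1,2,3}. \<forall>l\<in>{1,2,3}.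
    i \<noteq> k \<longrightarrow> j \<noteq> l \<longrightarrow> {(i, j), (k, l)} \<in> set diagonal_edges"
  by (simp add: diagonal_edges_def doubleton_eq_iff)

lemma diagonal_grid_graph_subset_diagonal_edges:
  assumes "grid_graph 3 3 E" "\<forall>e\<in>E. diagonal_edge e"
  shows "E \<subseteq> set diagonal_edges"
proof
  fix e assume "e \<in> E"
  then have "diagonal_edge e" using assms(2) by blast
  then obtain i j k l where e: "e = {(i, j), (k, l)}" "i \<noteq> k" "j \<noteq> l"
    unfolding diagonal_edge_def by blast
  moreover have "e \<subseteq> grid 3 3" using grid_graph_subset_Pow[OF assms(1)] \<open>e \<in> E\<close> by blast
  ultimately have "(i, j) \<in> grid 3 3" "(k, l) \<in> grid 3 3" by simp_all
  moreover have "{1..3::nat} = {1, 2, 3}" by auto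
  ultimately have "i \<in> {1, 2, 3}" "j \<in> {1, 2, 3}" "k \<in> {1, 2, 3}" "l \<in> {1, 2, 3}"
    unfolding grid_def by (simp_all only: mem_Times_iff fst_conv snd_conv)
  then have "{(i, j), (k, l)} \<in> set diagonal_edges"
    using e(2,3) by (rule diagonal_doubleton_in_diagonal_edges[rule_format])
  with e(1) show "e \<in> set diagonal_edges" by simp
qed

lemma ex_disjoint_list_iff_ex_disjoint_family:
  "(\<exists>Xs. (\<forall>s<length Xs. \<forall>t<length Xs. s \<noteq> t \<longrightarrow> Xs ! s \<inter> Xs ! t = {}) \<and>
      \<Union>(set Xs) = E \<and> (\<forall>X\<in>set Xs. P X)) \<longleftrightarrow>
    (\<exists>\<X>. finite \<X> \<and> pairwise disjnt \<X> \<and> \<Union>\<X> = E \<and> (\<forall>X\<in>\<X>. P X))"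
proof
  assume "\<exists>Xs. (\<forall>s<length Xs. \<forall>t<length Xs. s \<noteq> t \<longrightarrow> Xs ! s \<inter> Xs ! t = {}) \<and>
      \<Union>(set Xs) = E \<and> (\<forall>X\<in>set Xs. P X)"
  then obtain Xs where disj: "\<forall>s<length Xs. \<forall>t<length Xs. s \<noteq> t \<longrightarrow> Xs ! s \<inter> Xs ! t = {}"
    and "\<Union>(set Xs) = E" "\<forall>X\<in>set Xs. P X" by blast
  moreover have "pairwise disjnt (set Xs)"
    unfolding pairwise_def disjnt_def by (metis disj in_set_conv_nth)
  ultimately show "\<exists>\<X>. finite \<X> \<and> pairwise disjnt \<X> \<and> \<Union>\<X> = E \<and> (\<forall>X\<in>\<X>. P X)"
    by blast
next
  assume "\<exists>\<X>. finite \<X> \<and> pairwise disjnt \<X> \<and> \<Union>\<X> = E \<and> (\<forall>X\<in>\<X>. P X)"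
  then obtain \<X> where "finite \<X>" "pairwise disjnt \<X>" "\<Union>\<X> = E" "\<forall>X\<in>\<X>. P X" by blast
  moreover obtain Xs where "set Xs = \<X>" "distinct Xs"
    using finite_distinct_list[OF \<open>finite \<X>\<close>] by blast
  moreover have "Xs ! s \<inter> Xs ! t = {}" if "pairwise disjnt (set Xs)" "distinct Xs"
    "s < length Xs" "t < length Xs" "s \<noteq> t" for s t
    using that unfolding pairwise_def disjnt_def by (simp add: nth_eq_iff_index_eq)
  ultimately show "\<exists>Xs. (\<forall>s<length Xs. \<forall>t<length Xs. s \<noteq> t \<longrightarrow> Xs ! s \<inter> Xs ! t = {}) \<and>
      \<Union>(set Xs) = E \<and> (\<forall>X\<in>set Xs. P X)"
    by blast
qed

theorem mainTheorem15:
  fixes E :: "vtx set set"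
  assumes "grid_graph 3 3 E"
    and "\<forall>e\<in>E. diagonal_edge e"
  shows "degree_criterion 3 3 E \<longleftrightarrow>
    (\<exists>Xs :: vtx set set list.
        (\<forall>s<length Xs. \<forall>t<length Xs. s \<noteq> t \<longrightarrow> Xs ! s \<inter> Xs ! t = {}) \<and>
        \<Union>(set Xs) = E \<and>
        (\<forall>X\<in>set Xs. grid_graph 3 3 X \<and>
           (\<exists>B\<in>{B2, B3, B4, B5}. \<exists>H. is_rotation H B \<and> locally_isomorphic 3 3 X H)))"
proof -
  have "degree_criterion 3 3 E \<longleftrightarrow> balanced (grid 3 3) E"
    by (rule degree_criterion_iff_balanced[OF assms(1)])
  also have "\<dots> \<longleftrightarrow>
      (\<exists>\<X>. finite \<X> \<and> pairwise disjnt \<X> \<and> \<Union>\<X> = E \<and> (\<forall>X\<in>\<X>. building_block_copy X))"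
    by (rule balanced_iff_block_decomposition[OF diagonal_grid_graph_subset_diagonal_edges[OF assms]])
  finally show ?thesis
    unfolding ex_disjoint_list_iff_ex_disjoint_family building_block_copy_def .
qed

end
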